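(* For all $p,q\in\mathbb Z$, $r,s\ge0$ and $2\le n\le\infty$, the $n$-multicomplex $\mathcal ZW^n_s(p,q)$ is cofibrant in the $r$-model structure on $\mathrm{Ch}_n$; that is, for every morphism $f\colon A\to B$ of $n$-multicomplexes that is an $E_r$-quasi-isomorphism with $E_i(f)$ bidegree-wise surjective for all $0\le i\le r$, every morphism $\mathcal ZW^n_s(p,q)\to B$ lifts through $f$.
   Context: $R$ is a commutative unital ring. For $1\le n\le\infty$, an $n$-multicomplex is a $\mathbb Z\times\mathbb Z$-bigraded $R$-module $A$ with $R$-linear maps $d_i$ ($i\ge0$) of bidegree $(-i,1-i)$ such that $\sum_{i+j=l}(-1)^id_id_j=0$ for all $l\ge0$ and $d_i=0$ for $i\ge n$; morphisms are bidegree $(0,0)$ maps commuting with all $d_i$; category $\mathrm{Ch}_n$. Spectral sequence: $Z_0^{p,q}(A)=A^{p,q}$; for $r\ge1$, $Z_r^{p,q}(A)$ is the set of $a_0\in A^{p,q}$ for which there exist $a_j\in A^{p-j,q-j}$ ($1\le j\le r-1$) with $\sum_{i+j=l}(-1)^id_ia_j=0$ for $0\le l\le r-1$. $B_0=0$, $B_1^{p,q}(A)=A^{p,q}\cap\operatorname{im}d_0$, and for $r\ge2$, $B_r^{p,q}(A)$ is the set of $x\in A^{p,q}$ for which there exist $b_i\in A^{p+r-1-i,q+r-2-i}$ ($0\le i\le r-1$) with $x=\sum_{i=0}^{r-1}(-1)^id_ib_{r-1-i}$ and $\sum_{i=0}^l(-1)^id_ib_{l-i}=0$ for $0\le l\le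 r-2$. $E_r^{p,q}(A)=Z_r^{p,q}(A)/B_r^{p,q}(A)$, the spectral sequence of the column-filtered total complex; $f$ is an $E_r$-quasi-isomorphism if $E_{r+1}(f)$ is an isomorphism. The $r$-model structure on $\mathrm{Ch}_n$ ($2\le n\le\infty$) has weak equivalences the $E_r$-quasi-isomorphisms and fibrations the morphisms $f$ with $E_i(f)$ bidegree-wise surjective for $0\le i\le r$. $\mathbb D^n(p,q)$ is the free $n$-multicomplex on one generator in bidegree $(p,q)$. $\mathcal ZW^n_0(p,q)=\mathbb D^n(p,q)$; for $s\ge1$, $\mathcal ZW^n_s(p,q)$ is the $n$-multicomplex generated by $a_0,\dots,a_{s-1}$, $a_i$ in bidegree $(p-i,q-i)$, subject to the relations $\sum_{i+j=l}(-1)^id_ia_j=0$ for $0\le l\le s-1$ (equivalently the iterated pushout construction of the paper). *)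

theory Defs
  imports Main "HOL-Library.Extended_Nat"
begin

text \<open>A bigraded R-module is given as a family of submodules
  A p q of an ambient R-module (type 'm, scalar action sc), one for each bidegree (p,q).
  The structure map d_i is given bidegree-wise: d i p q is d_i restricted to A^{p,q},
  landing in A^{p-i,q+1-i}.\<close>

definition alt :: "nat \<Rightarrow> 'm::ab_group_add \<Rightarrow> 'm" where
  "alt i y = (if even i then y else - y)"

definition multicomplex ::
  "enat \<Rightarrow> ('r::comm_ring_1 \<Rightarrow> 'm::ab_group_add \<Rightarrow> 'm) \<Rightarrow> (int \<Rightarrow> int \<Rightarrow> 'm set)
    \<Rightarrow> (nat \<Rightarrow> int \<Rightarrow> int \<Rightarrow> 'm \<Rightarrow> 'm) \<Rightarrow> bool" where
  "multicomplex n sc A d \<longleftrightarrow>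
     module sc \<and> (\<forall>p q. module.subspace sc (A p q)) \<and>
     (\<forall>i p q. \<forall>x\<in>A p q. d i p q x \<in> A (p - int i) (q + 1 - int i)) \<and>
     (\<forall>i p q. \<forall>x\<in>A p q. \<forall>y\<in>A p q. d i p q (x + y) = d i p q x + d i p q y) \<and>
     (\<forall>i p q c. \<forall>x\<in>A p q. d i p q (sc c x) = sc c (d i p q x)) \<and>
     (\<forall>i p q. n \<le> enat i \<longrightarrow> (\<forall>x\<in>A p q. d i p q x = 0)) \<and>
     (\<forall>l p q. \<forall>x\<in>A p q.
        (\<Sum>i\<le>l. alt i (d i (p - int (l - i)) (q + 1 - int (l - i)) (d (l - i) p q x))) = 0)"

definition mc_hom ::
  "('r::comm_ring_1 \<Rightarrow> 'a::ab_group_add \<Rightarrow> 'a) \<Rightarrow> (int \<Rightarrow> int \<Rightarrow> 'a set) \<Rightarrow> (nat \<Rightarrow> int \<Rightarrow> int \<Rightarrow> 'a \<Rightarrow> 'a)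
    \<Rightarrow> ('r \<Rightarrow> 'b::ab_group_add \<Rightarrow> 'b) \<Rightarrow> (int \<Rightarrow> int \<Rightarrow> 'b set) \<Rightarrow> (nat \<Rightarrow> int \<Rightarrow> int \<Rightarrow> 'b \<Rightarrow> 'b)
    \<Rightarrow> (int \<Rightarrow> int \<Rightarrow> 'a \<Rightarrow> 'b) \<Rightarrow> bool" where
  "mc_hom scA A dA scB B dB f \<longleftrightarrow>
     (\<forall>p q. \<forall>x\<in>A p q. f p q x \<in> B p q) \<and>
     (\<forall>p q. \<forall>x\<in>A p q. \<forall>y\<in>A p q. f p q (x + y) = f p q x + f p q y) \<and>
     (\<forall>p q c. \<forall>x\<in>A p q. f p q (scA c x) = scB c (f p q x)) \<and>
     (\<forall>i p q. \<forall>x\<in>A p q. f (p - int i) (q + 1 - int i) (dA i p q x) = dB i p q (f p q x))"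

text \<open>Z_r^{p,q}(A). For r = 0 the conditions reduce to a 0 = x \<in> A p q.\<close>
definition Zset :: "nat \<Rightarrow> (int \<Rightarrow> int \<Rightarrow> 'm::ab_group_add set) \<Rightarrow> (nat \<Rightarrow> int \<Rightarrow> int \<Rightarrow> 'm \<Rightarrow> 'm)
    \<Rightarrow> int \<Rightarrow> int \<Rightarrow> 'm set" where
  "Zset r A d p q = {x. \<exists>a. a 0 = x \<and>
       (\<forall>j\<le>r - 1. a j \<in> A (p - int j) (q - int j)) \<and>
       (\<forall>l<r. (\<Sum>i\<le>l. alt i (d i (p - int (l - i)) (q - int (l - i)) (a (l - i)))) = 0)}"

text \<open>B_r^{p,q}(A). For r = 0 this is {0}; for r = 1 it is A^{p,q} \<inter> im d_0.\<close>
definition Bset :: "nat \<Rightarrow> (int \<Rightarrow> int \<Rightarrow> 'm::ab_group_add set) \<Rightarrow> (nat \<Rightarrow> int \<Rightarrow> int \<Rightarrow> 'm \<Rightarrow> 'm)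
    \<Rightarrow> int \<Rightarrow> int \<Rightarrow> 'm set" where
  "Bset r A d p q = {x. x \<in> A p q \<and> (\<exists>b.
       (\<forall>k<r. b k \<in> A (p + int r - 1 - int k) (q + int r - 2 - int k)) \<and>
       x = (\<Sum>i<r. alt i (d i (p + int r - 1 - int (r - 1 - i)) (q + int r - 2 - int (r - 1 - i))
                              (b (r - 1 - i)))) \<and>
       (\<forall>l. l + 2 \<le> r \<longrightarrow>
          (\<Sum>i\<le>l. alt i (d i (p + int r - 1 - int (l - i)) (q + int r - 2 - int (l - i))
                              (b (l - i)))) = 0))}"

text \<open>E_r^{p,q}(A) = Z_r/B_r, realised as the set of cosets x + B_r, x \<in> Z_r.\<close>
definition Ecoset :: "nat \<Rightarrow> (int \<Rightarrow> int \<Rightarrow> 'm::ab_group_add set) \<Rightarrow> (nat \<Rightarrow> int \<Rightarrow> int \<Rightarrow> 'm \<Rightarrow> 'm)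
    \<Rightarrow> int \<Rightarrow> int \<Rightarrow> 'm \<Rightarrow> 'm set" where
  "Ecoset r A d p q x = (\<lambda>b. x + b) ` Bset r A d p q"

definition Eset :: "nat \<Rightarrow> (int \<Rightarrow> int \<Rightarrow> 'm::ab_group_add set) \<Rightarrow> (nat \<Rightarrow> int \<Rightarrow> int \<Rightarrow> 'm \<Rightarrow> 'm)
    \<Rightarrow> int \<Rightarrow> int \<Rightarrow> 'm set set" where
  "Eset r A d p q = Ecoset r A d p q ` Zset r A d p q"

definition Emap :: "nat \<Rightarrow> (int \<Rightarrow> int \<Rightarrow> 'b::ab_group_add set) \<Rightarrow> (nat \<Rightarrow> int \<Rightarrow> int \<Rightarrow> 'b \<Rightarrow> 'b)
    \<Rightarrow> (int \<Rightarrow> int \<Rightarrow> 'a \<Rightarrow> 'b) \<Rightarrow> int \<Rightarrow> int \<Rightarrow> 'a set \<Rightarrow> 'b set" where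
  "Emap r B dB f p q X = Ecoset r B dB p q (f p q (SOME x. x \<in> X))"

text \<open>f is an E_r-quasi-isomorphism: E_{r+1}(f) is bijective in every bidegree.\<close>
definition E_quasi_iso :: "nat \<Rightarrow> (int \<Rightarrow> int \<Rightarrow> 'a::ab_group_add set) \<Rightarrow> (nat \<Rightarrow> int \<Rightarrow> int \<Rightarrow> 'a \<Rightarrow> 'a)
    \<Rightarrow> (int \<Rightarrow> int \<Rightarrow> 'b::ab_group_add set) \<Rightarrow> (nat \<Rightarrow> int \<Rightarrow> int \<Rightarrow> 'b \<Rightarrow> 'b)
    \<Rightarrow> (int \<Rightarrow> int \<Rightarrow> 'a \<Rightarrow> 'b) \<Rightarrow> bool" where
  "E_quasi_iso r A dA B dB f \<longleftrightarrow>
     (\<forall>p q. bij_betw (Emap (Suc r) B dB f p q) (Eset (Suc r) A dA p q) (Eset (Suc r) B dB p q))"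

definition E_fib :: "nat \<Rightarrow> (int \<Rightarrow> int \<Rightarrow> 'a::ab_group_add set) \<Rightarrow> (nat \<Rightarrow> int \<Rightarrow> int \<Rightarrow> 'a \<Rightarrow> 'a)
    \<Rightarrow> (int \<Rightarrow> int \<Rightarrow> 'b::ab_group_add set) \<Rightarrow> (nat \<Rightarrow> int \<Rightarrow> int \<Rightarrow> 'b \<Rightarrow> 'b)
    \<Rightarrow> (int \<Rightarrow> int \<Rightarrow> 'a \<Rightarrow> 'b) \<Rightarrow> bool" where
  "E_fib r A dA B dB f \<longleftrightarrow>
     (\<forall>i\<le>r. \<forall>p q. Emap i B dB f p q ` Eset i A dA p q = Eset i B dB p q)"

text \<open>Generator tuples (a_0,...,a_{max s 1 - 1}) with a_j in bidegree (p-j,q-j)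
  satisfying the relations of ZW_s(p,q) for 0 \<le> l \<le> s-1 (for s = 0: one free generator).\<close>
definition ZW_tuple :: "nat \<Rightarrow> int \<Rightarrow> int \<Rightarrow> (int \<Rightarrow> int \<Rightarrow> 'm::ab_group_add set)
    \<Rightarrow> (nat \<Rightarrow> int \<Rightarrow> int \<Rightarrow> 'm \<Rightarrow> 'm) \<Rightarrow> (nat \<Rightarrow> 'm) \<Rightarrow> bool" where
  "ZW_tuple s p q A d a \<longleftrightarrow>
     (\<forall>j\<le>s - 1. a j \<in> A (p - int j) (q - int j)) \<and>
     (\<forall>l<s. (\<Sum>i\<le>l. alt i (d i (p - int (l - i)) (q - int (l - i)) (a (l - i)))) = 0)"

text \<open>(Z, dZ) with generators gen is (a model of) ZW^n_s(p,q): the n-multicomplex generated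
  by gen subject to the relations, characterised by its universal property with respect to
  n-multicomplexes whose ambient module is of type 'm with action sc.\<close>
definition is_ZW :: "enat \<Rightarrow> nat \<Rightarrow> int \<Rightarrow> int
    \<Rightarrow> ('r::comm_ring_1 \<Rightarrow> 'z::ab_group_add \<Rightarrow> 'z) \<Rightarrow> (int \<Rightarrow> int \<Rightarrow> 'z set) \<Rightarrow> (nat \<Rightarrow> int \<Rightarrow> int \<Rightarrow> 'z \<Rightarrow> 'z)
    \<Rightarrow> (nat \<Rightarrow> 'z) \<Rightarrow> ('r \<Rightarrow> 'm::ab_group_add \<Rightarrow> 'm) \<Rightarrow> bool" where
  "is_ZW n s p q scZ Z dZ gen sc \<longleftrightarrow>
     multicomplex n scZ Z dZ \<and> ZW_tuple s p q Z dZ gen \<and>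
     (\<forall>B dB. multicomplex n sc B dB \<longrightarrow>
        (\<forall>b. ZW_tuple s p q B dB b \<longrightarrow>
           (\<exists>h. mc_hom scZ Z dZ sc B dB h \<and>
                (\<forall>j\<le>s - 1. h (p - int j) (q - int j) (gen j) = b j))) \<and>
        (\<forall>h h'. mc_hom scZ Z dZ sc B dB h \<and> mc_hom scZ Z dZ sc B dB h' \<and>
                (\<forall>j\<le>s - 1. h (p - int j) (q - int j) (gen j) = h' (p - int j) (q - int j) (gen j))
            \<longrightarrow> (\<forall>p' q'. \<forall>x\<in>Z p' q'. h p' q' x = h' p' q' x)))"

end

theory Submission
  imports Defs
begin

text \<open>Maps out of \<open>ZW_s(p,q)\<close> are tuples \<open>a_0, \<dots>, a_{s-1}\<close> satisfying the defining relations,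
  so it suffices to lift such tuples along \<open>f\<close>, which is done by induction on \<open>s\<close>.
  For \<open>s \<le> r\<close>, surjectivity of \<open>E_{s+1}(f)\<close> lifts the bottom element up to a boundary in
  \<open>B_{s+1}\<close>; that boundary comes from a zigzag of length \<open>s\<close>, which lifts by induction, and
  the higher components are then corrected by lifting the shifted difference tuple.
  For \<open>s > r\<close>, lift the first \<open>s\<close> components; the obstruction \<open>y = (D a)_s\<close> is a cycle
  for the total differential \<open>D\<close> (because \<open>D\<^sup>2 = 0\<close>) and is killed by \<open>f\<close>, so by
  injectivity of \<open>E_{r+1}(f)\<close> it bounds a zigzag of length \<open>r\<close> in the kernel of \<open>f\<close>;
  subtracting that zigzag, shifted down by \<open>s - r\<close> columns, removes the obstruction.\<close>

section \<open>The total differential\<close>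

lemma alt_add: "alt i (x + y) = alt i x + alt i (y::'a::ab_group_add)"
  by (simp add: alt_def)

lemma alt_diff: "alt i (x - y) = alt i x - alt i (y::'a::ab_group_add)"
  by (simp add: alt_def)

lemma alt_0 [simp]: "alt i (0::'a::ab_group_add) = 0"
  by (simp add: alt_def)

lemma alt_alt: "alt i (alt j x) = alt (i + j) (x::'a::ab_group_add)"
  by (simp add: alt_def)

lemma alt_alt_same [simp]: "alt i (alt i x) = (x::'a::ab_group_add)"
  by (simp add: alt_def)

lemma alt_sum: "alt i (sum g S) = (\<Sum>x\<in>S. alt i (g x :: 'a::ab_group_add))"
  by (simp add: alt_def sum_negf)

text \<open>A sequence \<open>a\<close> with \<open>a k \<in> A (P - k) (Q - k)\<close> is an element of the column-filtered
  total complex; \<open>tdiff d P Q a m\<close> is the component \<open>(D a)_m\<close> of its total differential,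
  in bidegree \<open>(P - m, Q + 1 - m)\<close>.\<close>
definition tdiff ::
  "(nat \<Rightarrow> int \<Rightarrow> int \<Rightarrow> 'm \<Rightarrow> 'm) \<Rightarrow> int \<Rightarrow> int \<Rightarrow> (nat \<Rightarrow> 'm) \<Rightarrow> nat \<Rightarrow> 'm::ab_group_add"
  where "tdiff d P Q a m = (\<Sum>i\<le>m. alt i (d i (P - int (m - i)) (Q - int (m - i)) (a (m - i))))"

text \<open>\<open>cycle_upto A d P Q s a\<close> says that \<open>a 0, \<dots>, a (s - 1)\<close> satisfy the relations of
  \<open>ZW_s(P,Q)\<close>; a zigzag of length \<open>s\<close> has one more entry \<open>a s\<close>, subject to no relation.
  For \<open>s > 0\<close>, \<open>Z_s\<close> consists of the bottom entries \<open>a 0\<close> of such tuples, and \<open>B_{s+1}\<close>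
  of the values \<open>(D a)_s\<close> on zigzags of length \<open>s\<close>.\<close>
definition cycle_upto ::
  "(int \<Rightarrow> int \<Rightarrow> 'm::ab_group_add set) \<Rightarrow> (nat \<Rightarrow> int \<Rightarrow> int \<Rightarrow> 'm \<Rightarrow> 'm) \<Rightarrow> int \<Rightarrow> int \<Rightarrow> nat
    \<Rightarrow> (nat \<Rightarrow> 'm) \<Rightarrow> bool"
  where "cycle_upto A d P Q s a \<longleftrightarrow>
    (\<forall>k<s. a k \<in> A (P - int k) (Q - int k)) \<and> (\<forall>l<s. tdiff d P Q a l = 0)"

definition zigzag ::
  "(int \<Rightarrow> int \<Rightarrow> 'm::ab_group_add set) \<Rightarrow> (nat \<Rightarrow> int \<Rightarrow> int \<Rightarrow> 'm \<Rightarrow> 'm) \<Rightarrow> int \<Rightarrow> int \<Rightarrow> nat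
    \<Rightarrow> (nat \<Rightarrow> 'm) \<Rightarrow> bool"
  where "zigzag A d P Q s a \<longleftrightarrow> cycle_upto A d P Q s a \<and> a s \<in> A (P - int s) (Q - int s)"

definition delay :: "nat \<Rightarrow> (nat \<Rightarrow> 'a::zero) \<Rightarrow> nat \<Rightarrow> 'a"
  where "delay t a k = (if k < t then 0 else a (k - t))"

lemma tdiff_cong: "(\<And>k. k \<le> m \<Longrightarrow> a k = b k) \<Longrightarrow> tdiff d P Q a m = tdiff d P Q b m"
  unfolding tdiff_def by (intro sum.cong) auto

lemma cycle_upto_cong:
  "(\<And>k. k < s \<Longrightarrow> a k = b k) \<Longrightarrow> cycle_upto A d P Q s a = cycle_upto A d P Q s b"
  unfolding cycle_upto_def using tdiff_cong[of _ a b] by (metis le_less_trans)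

lemma cycle_upto_upd [simp]: "cycle_upto A d P Q s (a(s := x)) = cycle_upto A d P Q s a"
  by (rule cycle_upto_cong) simp

lemma cycle_upto_Suc: "cycle_upto A d P Q (Suc s) a \<longleftrightarrow> zigzag A d P Q s a \<and> tdiff d P Q a s = 0"
  unfolding zigzag_def cycle_upto_def less_Suc_eq by blast

lemma cycle_upto_bottom: "cycle_upto A d P Q (Suc s) a \<Longrightarrow> a 0 \<in> A P Q"
  unfolding cycle_upto_def by (metis diff_zero of_nat_0 zero_less_Suc)

lemma zigzag_mem: "zigzag A d P Q s a \<Longrightarrow> k \<le> s \<Longrightarrow> a k \<in> A (P - int k) (Q - int k)"
  unfolding zigzag_def cycle_upto_def by (metis le_neq_implies_less)

lemma zigzag_tdiff_low: "zigzag A d P Q s a \<Longrightarrow> l < s \<Longrightarrow> tdiff d P Q a l = 0"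
  unfolding zigzag_def cycle_upto_def by blast

lemma Zset_0: "Zset 0 A d p q = A p q"
  by (auto simp: Zset_def intro: exI[of _ "\<lambda>_. x" for x])

lemma Zset_Suc_iff: "x \<in> Zset (Suc s) A d p q \<longleftrightarrow> (\<exists>a. a 0 = x \<and> cycle_upto A d p q (Suc s) a)"
  by (simp add: Zset_def cycle_upto_def tdiff_def less_Suc_eq_le)

lemma Bset_mem: "x \<in> Bset r A d p q \<Longrightarrow> x \<in> A p q"
  by (simp add: Bset_def)

lemma Zset_mem: "x \<in> Zset r A d p q \<Longrightarrow> x \<in> A p q"
  by (auto simp: Zset_def)

lemma ZW_tuple_iff_cycle_upto: "0 < s \<Longrightarrow> ZW_tuple s p q A d a \<longleftrightarrow> cycle_upto A d p q s a"
  by (auto simp: ZW_tuple_def cycle_upto_def tdiff_def)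

section \<open>Multicomplexes\<close>

locale mcomplex =
  fixes n :: enat and sc :: "'r::comm_ring_1 \<Rightarrow> 'm::ab_group_add \<Rightarrow> 'm"
    and A :: "int \<Rightarrow> int \<Rightarrow> 'm set" and d :: "nat \<Rightarrow> int \<Rightarrow> int \<Rightarrow> 'm \<Rightarrow> 'm"
  assumes multicomplex: "multicomplex n sc A d"
begin

lemma subspace: "module.subspace sc (A p q)"
  and module: "module sc"
  using multicomplex by (simp_all add: multicomplex_def)

lemma zero_mem [simp]: "0 \<in> A p q"
  using module.subspace_0[OF module subspace] .

lemma add_mem: "x \<in> A p q \<Longrightarrow> y \<in> A p q \<Longrightarrow> x + y \<in> A p q"
  using module.subspace_add[OF module subspace] by blast

lemma diff_mem: "x \<in> A p q \<Longrightarrow> y \<in> A p q \<Longrightarrow> x - y \<in> A p q"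
  using module.subspace_diff[OF module subspace] by blast

lemma alt_mem: "x \<in> A p q \<Longrightarrow> alt i x \<in> A p q"
  using module.subspace_neg[OF module subspace] by (simp add: alt_def)

lemma sum_mem: "(\<And>x. x \<in> S \<Longrightarrow> g x \<in> A p q) \<Longrightarrow> sum g S \<in> A p q"
  using module.subspace_sum[OF module subspace] by blast

lemma d_mem: "x \<in> A p q \<Longrightarrow> d i p q x \<in> A (p - int i) (q + 1 - int i)"
  using multicomplex by (simp add: multicomplex_def)

lemma d_add: "x \<in> A p q \<Longrightarrow> y \<in> A p q \<Longrightarrow> d i p q (x + y) = d i p q x + d i p q y"
  using multicomplex by (simp add: multicomplex_def)

lemma d_zero [simp]: "d i p q 0 = 0"
  using d_add[of 0 p q 0 i] by simp

lemma d_diff: "x \<in> A p q \<Longrightarrow> y \<in> A p q \<Longrightarrow> d i p q (x - y) = d i p q x - d i p q y"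
  using d_add[of "x - y" p q y i] diff_mem[of x p q y] by (simp add: eq_diff_eq)

lemma d_neg: "x \<in> A p q \<Longrightarrow> d i p q (- x) = - d i p q x"
  using d_diff[of 0 p q x i] by simp

lemma d_alt: "x \<in> A p q \<Longrightarrow> d i p q (alt j x) = alt j (d i p q x)"
  by (simp add: alt_def d_neg)

lemma d_sum: "finite S \<Longrightarrow> (\<And>x. x \<in> S \<Longrightarrow> g x \<in> A p q) \<Longrightarrow> d i p q (sum g S) = (\<Sum>x\<in>S. d i p q (g x))"
  by (induction S rule: finite_induct) (simp_all add: d_add sum_mem)

lemma d_d: "x \<in> A p q \<Longrightarrow>
    (\<Sum>i\<le>l. alt i (d i (p - int (l - i)) (q + 1 - int (l - i)) (d (l - i) p q x))) = 0"
  using multicomplex by (simp add: multicomplex_def)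

lemma d_term_mem:
  assumes "i \<le> m" and "a (m - i) \<in> A (P - int (m - i)) (Q - int (m - i))"
  shows "d i (P - int (m - i)) (Q - int (m - i)) (a (m - i)) \<in> A (P - int m) (Q + 1 - int m)"
  using d_mem[OF assms(2), of i] assms(1) by (simp add: algebra_simps)

lemma tdiff_mem:
  "(\<And>k. k \<le> m \<Longrightarrow> a k \<in> A (P - int k) (Q - int k)) \<Longrightarrow> tdiff d P Q a m \<in> A (P - int m) (Q + 1 - int m)"
  unfolding tdiff_def by (intro sum_mem alt_mem d_term_mem) (auto simp del: of_nat_diff)

lemma tdiff_diff:
  assumes "\<And>k. k \<le> m \<Longrightarrow> a k \<in> A (P - int k) (Q - int k)"
    and "\<And>k. k \<le> m \<Longrightarrow> b k \<in> A (P - int k) (Q - int k)"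
  shows "tdiff d P Q (\<lambda>k. a k - b k) m = tdiff d P Q a m - tdiff d P Q b m"
  unfolding tdiff_def sum_subtractf[symmetric] using assms
  by (intro sum.cong) (simp_all add: d_diff alt_diff del: of_nat_diff)

lemma tdiff_add:
  assumes "\<And>k. k \<le> m \<Longrightarrow> a k \<in> A (P - int k) (Q - int k)"
    and "\<And>k. k \<le> m \<Longrightarrow> b k \<in> A (P - int k) (Q - int k)"
  shows "tdiff d P Q (\<lambda>k. a k + b k) m = tdiff d P Q a m + tdiff d P Q b m"
  unfolding tdiff_def sum.distrib[symmetric] using assms
  by (intro sum.cong) (simp_all add: d_add alt_add del: of_nat_diff)

lemma tdiff_alt:
  assumes "\<And>k. k \<le> m \<Longrightarrow> a k \<in> A (P - int k) (Q - int k)"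
  shows "tdiff d P Q (\<lambda>k. alt j (a k)) m = alt j (tdiff d P Q a m)"
  unfolding tdiff_def alt_sum using assms
  by (intro sum.cong) (simp_all add: d_alt alt_alt add.commute del: of_nat_diff)

lemma tdiff_zero: "(\<And>k. k \<le> m \<Longrightarrow> a k = 0) \<Longrightarrow> tdiff d P Q a m = 0"
  unfolding tdiff_def by (intro sum.neutral) auto

lemma tdiff_shift:
  assumes "\<And>k. k < t \<Longrightarrow> a k = 0"
  shows "tdiff d P Q a (m + t) = tdiff d (P - int t) (Q - int t) (\<lambda>k. a (k + t)) m"
  unfolding tdiff_def
proof (rule sum.mono_neutral_cong_right)
  show "\<forall>i\<in>{..m + t} - {..m}.
      alt i (d i (P - int (m + t - i)) (Q - int (m + t - i)) (a (m + t - i))) = 0"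
  proof
    fix i assume "i \<in> {..m + t} - {..m}"
    then have "m + t - i < t" by auto
    then show "alt i (d i (P - int (m + t - i)) (Q - int (m + t - i)) (a (m + t - i))) = 0"
      by (simp add: assms)
  qed
  show "alt i (d i (P - int (m + t - i)) (Q - int (m + t - i)) (a (m + t - i))) =
      alt i (d i (P - int t - int (m - i)) (Q - int t - int (m - i)) (a (m - i + t)))"
    if "i \<in> {..m}" for i
  proof -
    from that have "m + t - i = m - i + t" by auto
    then show ?thesis by (simp add: algebra_simps)
  qed
qed auto

text \<open>The multicomplex relations, summed up: \<open>D\<close> kills the unsigned total differential.\<close>
lemma tdiff_plain_tdiff:
  assumes b: "\<And>k. k \<le> m \<Longrightarrow> b k \<in> A (P - int k) (Q - int k)"
  shows "tdiff d P (Q + 1) (\<lambda>l. \<Sum>j\<le>l. d j (P - int (l - j)) (Q - int (l - j)) (b (l - j))) m = 0"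
proof -
  define H where "H i j = alt i (d i (P - int (m - i)) (Q + 1 - int (m - i))
      (d j (P - int (m - i - j)) (Q - int (m - i - j)) (b (m - i - j))))" for i j
  have "tdiff d P (Q + 1) (\<lambda>l. \<Sum>j\<le>l. d j (P - int (l - j)) (Q - int (l - j)) (b (l - j))) m
      = (\<Sum>i\<le>m. \<Sum>j\<le>m - i. H i j)"
    unfolding tdiff_def
  proof (rule sum.cong[OF refl])
    fix i assume "i \<in> {..m}"
    have "d i (P - int (m - i)) (Q + 1 - int (m - i))
        (\<Sum>j\<le>m - i. d j (P - int (m - i - j)) (Q - int (m - i - j)) (b (m - i - j)))
      = (\<Sum>j\<le>m - i. d i (P - int (m - i)) (Q + 1 - int (m - i))
        (d j (P - int (m - i - j)) (Q - int (m - i - j)) (b (m - i - j))))"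
      by (intro d_sum finite_atMost d_term_mem) (use b in \<open>auto simp del: of_nat_diff\<close>)
    then show "alt i (d i (P - int (m - i)) (Q + 1 - int (m - i))
        (\<Sum>j\<le>m - i. d j (P - int (m - i - j)) (Q - int (m - i - j)) (b (m - i - j))))
      = (\<Sum>j\<le>m - i. H i j)"
      by (simp only: H_def alt_sum)
  qed
  also have "\<dots> = (\<Sum>(i, j)\<in>{(i, j). i + j \<le> m}. H i j)"
    by (simp add: pairs_le_eq_Sigma sum.Sigma)
  also have "\<dots> = (\<Sum>l\<le>m. \<Sum>i\<le>l. H i (l - i))"
    by (rule sum.triangle_reindex_eq)
  also have "\<dots> = 0"
  proof (rule sum.neutral, rule ballI)
    fix l assume "l \<in> {..m}"
    then have "(\<Sum>i\<le>l. H i (l - i)) = (\<Sum>i\<le>l. alt i (d i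
        (P - int (m - l) - int (l - i)) (Q - int (m - l) + 1 - int (l - i))
        (d (l - i) (P - int (m - l)) (Q - int (m - l)) (b (m - l)))))"
      by (intro sum.cong refl) (auto simp: H_def algebra_simps)
    also have "\<dots> = 0"
      using \<open>l \<in> {..m}\<close> b[of "m - l"] by (intro d_d) auto
    finally show "(\<Sum>i\<le>l. H i (l - i)) = 0" .
  qed
  finally show ?thesis .
qed

lemma alt_tdiff:
  assumes "\<And>k. k \<le> m \<Longrightarrow> a k \<in> A (P - int k) (Q - int k)"
  shows "alt m (tdiff d P Q a m) =
    (\<Sum>j\<le>m. d j (P - int (m - j)) (Q - int (m - j)) (alt (m - j) (a (m - j))))"
  unfolding tdiff_def alt_sum using assms
  by (intro sum.cong) (auto simp: d_neg alt_def simp del: of_nat_diff)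

text \<open>Conjugation by the signs \<open>(-1)\<^sup>k\<close> turns the unsigned total differential into \<open>D\<close>
  (\<open>alt_tdiff\<close>), so this is \<open>D\<^sup>2 = 0\<close>.\<close>
lemma tdiff_alt_tdiff:
  assumes a: "\<And>k. k \<le> m \<Longrightarrow> a k \<in> A (P - int k) (Q - int k)"
  shows "tdiff d P (Q + 1) (\<lambda>l. alt l (tdiff d P Q a l)) m = 0"
proof -
  have "tdiff d P (Q + 1) (\<lambda>l. alt l (tdiff d P Q a l)) m = tdiff d P (Q + 1)
      (\<lambda>l. \<Sum>j\<le>l. d j (P - int (l - j)) (Q - int (l - j)) (alt (l - j) (a (l - j)))) m"
    using a by (intro tdiff_cong alt_tdiff) auto
  also have "\<dots> = 0"
    using tdiff_plain_tdiff[of m "\<lambda>k. alt k (a k)"] a by (simp add: alt_mem)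
  finally show ?thesis .
qed

lemma cycle_upto_diff:
  assumes "cycle_upto A d P Q s a" and "cycle_upto A d P Q s b"
  shows "cycle_upto A d P Q s (\<lambda>k. a k - b k)"
  using assms unfolding cycle_upto_def by (simp add: diff_mem tdiff_diff)

lemma cycle_upto_add:
  assumes "cycle_upto A d P Q s a" and "cycle_upto A d P Q s b"
  shows "cycle_upto A d P Q s (\<lambda>k. a k + b k)"
  using assms unfolding cycle_upto_def by (simp add: add_mem tdiff_add)

lemma tdiff_extends_to_cycle:
  assumes "zigzag A d P Q s u"
  shows "\<exists>e. e 0 = tdiff d P Q u s \<and> (\<forall>t. cycle_upto A d (P - int s) (Q + 1 - int s) t e)"
proof -
  note u = zigzag_mem[OF assms] and low = zigzag_tdiff_low[OF assms]
  define u' where "u' k = (if k \<le> s then u k else 0)" for k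
  have u': "u' k \<in> A (P - int k) (Q - int k)" for k
    using u by (simp add: u'_def)
  have tdiff_u': "tdiff d P Q u' l = tdiff d P Q u l" if "l \<le> s" for l
    using that by (intro tdiff_cong) (simp add: u'_def)
  define W where "W = (\<lambda>l. alt l (tdiff d P Q u' l))"
  have W_low: "W k = 0" if "k < s" for k
    using that low tdiff_u' by (simp add: W_def)
  have W_mem: "W (k + s) \<in> A (P - int s - int k) (Q + 1 - int s - int k)" for k
    using tdiff_mem[of "k + s" u' P Q] u' by (simp add: W_def alt_mem algebra_simps)
  define e where "e = (\<lambda>k. alt s (W (k + s)))"
  have "tdiff d (P - int s) (Q + 1 - int s) e m = 0" for m
  proof -
    have "tdiff d (P - int s) (Q + 1 - int s) e m
        = alt s (tdiff d (P - int s) (Q + 1 - int s) (\<lambda>k. W (k + s)) m)"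
      unfolding e_def by (rule tdiff_alt) (rule W_mem)
    also have "\<dots> = alt s (tdiff d P (Q + 1) W (m + s))"
      using tdiff_shift[of s W P "Q + 1" m] W_low by simp
    also have "\<dots> = 0"
      using tdiff_alt_tdiff[of "m + s" u' P Q] u' by (simp add: W_def)
    finally show ?thesis .
  qed
  moreover have "e 0 = tdiff d P Q u s"
    by (simp add: e_def W_def tdiff_u')
  ultimately show ?thesis
    using W_mem unfolding cycle_upto_def by (intro exI[of _ e]) (simp add: e_def alt_mem)
qed

lemma Bset_0_iff: "x \<in> Bset 0 A d p q \<longleftrightarrow> x = 0"
  by (auto simp: Bset_def)

lemma Bset_Suc_iff:
  "x \<in> Bset (Suc s) A d p q \<longleftrightarrow>
    (\<exists>b. zigzag A d (p + int s) (q + int s - 1) s b \<and> x = tdiff d (p + int s) (q + int s - 1) b s)"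
proof -
  have P: "p + int (Suc s) - 1 = p + int s" and Q: "q + int (Suc s) - 2 = q + int s - 1"
    and l: "\<And>l. (l + 2 \<le> Suc s) = (l < s)"
    by auto
  have "x \<in> Bset (Suc s) A d p q \<longleftrightarrow> x \<in> A p q \<and> (\<exists>b.
      (\<forall>k<Suc s. b k \<in> A (p + int s - int k) (q + int s - 1 - int k)) \<and>
      x = tdiff d (p + int s) (q + int s - 1) b s \<and>
      (\<forall>l<s. tdiff d (p + int s) (q + int s - 1) b l = 0))"
    unfolding Bset_def tdiff_def P Q l lessThan_Suc_atMost diff_Suc_1 mem_Collect_eq ..
  also have "\<dots> \<longleftrightarrow> (\<exists>b. zigzag A d (p + int s) (q + int s - 1) s b \<and>
      x = tdiff d (p + int s) (q + int s - 1) b s)"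
    using tdiff_mem[of s _ "p + int s" "q + int s - 1"]
      zigzag_mem[of A d "p + int s" "q + int s - 1" s]
    by (auto simp: zigzag_def cycle_upto_def less_Suc_eq)
  finally show ?thesis .
qed

lemma zigzag_diff: "zigzag A d P Q s a \<Longrightarrow> zigzag A d P Q s b \<Longrightarrow> zigzag A d P Q s (\<lambda>k. a k - b k)"
  unfolding zigzag_def by (simp add: cycle_upto_diff diff_mem)

lemma zero_in_Bset: "0 \<in> Bset r A d p q"
proof (cases r)
  case (Suc s)
  have "zigzag A d (p + int s) (q + int s - 1) s (\<lambda>_. 0)"
    by (simp add: zigzag_def cycle_upto_def tdiff_zero)
  with Suc show ?thesis
    by (auto simp: Bset_Suc_iff tdiff_zero)
qed (simp add: Bset_0_iff)

lemma Bset_diff: "x \<in> Bset r A d p q \<Longrightarrow> y \<in> Bset r A d p q \<Longrightarrow> x - y \<in> Bset r A d p q"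
proof (cases r)
  case (Suc s)
  assume "x \<in> Bset r A d p q" "y \<in> Bset r A d p q"
  then obtain b c
    where "zigzag A d (p + int s) (q + int s - 1) s b" "zigzag A d (p + int s) (q + int s - 1) s c"
    and "x = tdiff d (p + int s) (q + int s - 1) b s" "y = tdiff d (p + int s) (q + int s - 1) c s"
    unfolding Suc Bset_Suc_iff by blast
  then show ?thesis
    unfolding Suc Bset_Suc_iff
    by (intro exI[of _ "\<lambda>k. b k - c k"]) (simp add: zigzag_diff tdiff_diff zigzag_mem)
qed (simp add: Bset_0_iff)

lemma Ecoset_eq_iff: "Ecoset r A d p q x = Ecoset r A d p q y \<longleftrightarrow> x - y \<in> Bset r A d p q"
proof
  assume "Ecoset r A d p q x = Ecoset r A d p q y"
  moreover have "x \<in> Ecoset r A d p q x"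
    using zero_in_Bset by (force simp: Ecoset_def)
  ultimately obtain b where "b \<in> Bset r A d p q" "x = y + b"
    by (auto simp: Ecoset_def)
  then show "x - y \<in> Bset r A d p q" by simp
next
  assume xy: "x - y \<in> Bset r A d p q"
  have "x + b \<in> Ecoset r A d p q y" if "b \<in> Bset r A d p q" for b
    using Bset_diff[OF that Bset_diff[OF zero_in_Bset xy]]
    by (auto simp: Ecoset_def intro: image_eqI[where x = "b - (y - x)"])
  moreover have "y + b \<in> Ecoset r A d p q x" if "b \<in> Bset r A d p q" for b
    using Bset_diff[OF that xy] by (auto simp: Ecoset_def intro: image_eqI[where x = "b - (x - y)"])
  ultimately show "Ecoset r A d p q x = Ecoset r A d p q y"
    by (auto simp: Ecoset_def)
qed

lemma tdiff_delay:
  "tdiff d P Q (delay t a) l = (if l < t then 0 else tdiff d (P - int t) (Q - int t) a (l - t))"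
proof (cases "l < t")
  case False
  then have "tdiff d P Q (delay t a) ((l - t) + t) = tdiff d (P - int t) (Q - int t) a (l - t)"
    by (subst tdiff_shift) (simp_all add: delay_def)
  with False show ?thesis by simp
qed (simp add: tdiff_zero delay_def)

lemma zigzag_delay:
  assumes a: "zigzag A d (P - int t) (Q - int t) s a"
  shows "zigzag A d P Q (s + t) (delay t a)"
proof -
  have "delay t a k \<in> A (P - int k) (Q - int k)" if "k \<le> s + t" for k
    using zigzag_mem[OF a, of "k - t"] that by (auto simp: delay_def)
  moreover have "tdiff d P Q (delay t a) l = 0" if "l < s + t" for l
    using zigzag_tdiff_low[OF a, of "l - t"] that by (simp add: tdiff_delay)
  ultimately show ?thesis
    unfolding zigzag_def cycle_upto_def by (metis less_imp_le order.refl)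
qed

end

section \<open>Morphisms and lifting of cycles\<close>

abbreviation seq_image :: "(int \<Rightarrow> int \<Rightarrow> 'a \<Rightarrow> 'b) \<Rightarrow> int \<Rightarrow> int \<Rightarrow> (nat \<Rightarrow> 'a) \<Rightarrow> nat \<Rightarrow> 'b"
  where "seq_image f P Q a \<equiv> \<lambda>k. f (P - int k) (Q - int k) (a k)"

locale mcomplex_hom = src: mcomplex n scA A dA + tgt: mcomplex n scB B dB
  for n and scA :: "'r::comm_ring_1 \<Rightarrow> 'a::ab_group_add \<Rightarrow> 'a" and A dA
    and scB :: "'r \<Rightarrow> 'b::ab_group_add \<Rightarrow> 'b" and B dB +
  fixes f :: "int \<Rightarrow> int \<Rightarrow> 'a \<Rightarrow> 'b"
  assumes hom: "mc_hom scA A dA scB B dB f"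
begin

lemma hom_mem: "x \<in> A p q \<Longrightarrow> f p q x \<in> B p q"
  using hom by (simp add: mc_hom_def)

lemma hom_add: "x \<in> A p q \<Longrightarrow> y \<in> A p q \<Longrightarrow> f p q (x + y) = f p q x + f p q y"
  using hom by (simp add: mc_hom_def)

lemma hom_zero [simp]: "f p q 0 = 0"
  using hom_add[of 0 p q 0] by simp

lemma hom_diff: "x \<in> A p q \<Longrightarrow> y \<in> A p q \<Longrightarrow> f p q (x - y) = f p q x - f p q y"
  using hom_add[of "x - y" p q y] src.diff_mem[of x p q y] by (simp add: eq_diff_eq)

lemma hom_alt: "x \<in> A p q \<Longrightarrow> f p q (alt j x) = alt j (f p q x)"
  using hom_diff[of 0 p q x] by (simp add: alt_def)

lemma hom_sum: "finite S \<Longrightarrow> (\<And>x. x \<in> S \<Longrightarrow> g x \<in> A p q) \<Longrightarrow> f p q (sum g S) = (\<Sum>x\<in>S. f p q (g x))"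
  by (induction S rule: finite_induct) (simp_all add: hom_add src.sum_mem)

lemma hom_d: "x \<in> A p q \<Longrightarrow> f (p - int i) (q + 1 - int i) (dA i p q x) = dB i p q (f p q x)"
  using hom by (simp add: mc_hom_def)

lemma hom_tdiff:
  assumes a: "\<And>k. k \<le> m \<Longrightarrow> a k \<in> A (P - int k) (Q - int k)"
  shows "f (P - int m) (Q + 1 - int m) (tdiff dA P Q a m) = tdiff dB P Q (seq_image f P Q a) m"
  unfolding tdiff_def
proof (subst hom_sum, goal_cases)
  case (2 i)
  then show ?case
    using a by (intro src.alt_mem src.d_term_mem) (auto simp del: of_nat_diff)
next
  case 3
  show ?case
  proof (rule sum.cong[OF refl], goal_cases)
    case (1 i)
    then have "P - int m = P - int (m - i) - int i" "Q + 1 - int m = Q - int (m - i) + 1 - int i"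
      and "a (m - i) \<in> A (P - int (m - i)) (Q - int (m - i))"
      using a[of "m - i"] by auto
    then show ?case
      by (simp only: hom_alt hom_d src.d_mem)
  qed
qed simp

lemma cycle_upto_hom:
  assumes a: "cycle_upto A dA P Q s a"
  shows "cycle_upto B dB P Q s (seq_image f P Q a)"
proof -
  have "tdiff dB P Q (seq_image f P Q a) l = 0" if "l < s" for l
    using hom_tdiff[of l a P Q, symmetric] a that by (simp add: cycle_upto_def)
  with a show ?thesis
    by (simp add: cycle_upto_def hom_mem)
qed

lemma zigzag_hom: "zigzag A dA P Q s a \<Longrightarrow> zigzag B dB P Q s (seq_image f P Q a)"
  unfolding zigzag_def by (simp add: cycle_upto_hom hom_mem)

lemma Bset_hom: "x \<in> Bset r A dA p q \<Longrightarrow> f p q x \<in> Bset r B dB p q"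
proof (cases r)
  case (Suc s)
  assume "x \<in> Bset r A dA p q"
  then obtain b where b: "zigzag A dA (p + int s) (q + int s - 1) s b"
    and x: "x = tdiff dA (p + int s) (q + int s - 1) b s"
    unfolding Suc src.Bset_Suc_iff by blast
  have "f p q x =
      tdiff dB (p + int s) (q + int s - 1) (seq_image f (p + int s) (q + int s - 1) b) s"
    using hom_tdiff[of s b "p + int s" "q + int s - 1"] zigzag_mem[OF b] by (simp add: x)
  with zigzag_hom[OF b] show ?thesis
    unfolding Suc tgt.Bset_Suc_iff by blast
qed (simp add: src.Bset_0_iff tgt.Bset_0_iff)

lemma Emap_Ecoset: "Emap r B dB f p q (Ecoset r A dA p q x) = Ecoset r B dB p q (f p q x)"
  if "x \<in> A p q"
proof -
  have "x \<in> Ecoset r A dA p q x"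
    using src.zero_in_Bset by (force simp: Ecoset_def)
  then obtain b where b: "b \<in> Bset r A dA p q" and some: "(SOME z. z \<in> Ecoset r A dA p q x) = x + b"
    using someI[of "\<lambda>z. z \<in> Ecoset r A dA p q x"] by (auto simp: Ecoset_def)
  have "f p q (x + b) - f p q x \<in> Bset r B dB p q"
    using Bset_hom[OF b] hom_add[OF that Bset_mem[OF b]] by simp
  then show ?thesis
    unfolding Emap_def some tgt.Ecoset_eq_iff .
qed

lemma ZW_tuple_hom:
  assumes "ZW_tuple s p q A dA a"
  shows "ZW_tuple s p q B dB (seq_image f p q a)"
proof (cases "s = 0")
  case True
  with assms show ?thesis by (simp add: ZW_tuple_def hom_mem)
next
  case False
  with assms show ?thesis by (simp add: ZW_tuple_iff_cycle_upto cycle_upto_hom)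
qed

end

text \<open>For \<open>s > 0\<close> this is the right lifting property of \<open>f\<close> against \<open>ZW_s\<close>,
  stated for the tuples of images of the generators.\<close>
definition lifts_cycles :: "(int \<Rightarrow> int \<Rightarrow> 'a::ab_group_add set) \<Rightarrow> (nat \<Rightarrow> int \<Rightarrow> int \<Rightarrow> 'a \<Rightarrow> 'a)
    \<Rightarrow> (int \<Rightarrow> int \<Rightarrow> 'b::ab_group_add set) \<Rightarrow> (nat \<Rightarrow> int \<Rightarrow> int \<Rightarrow> 'b \<Rightarrow> 'b)
    \<Rightarrow> (int \<Rightarrow> int \<Rightarrow> 'a \<Rightarrow> 'b) \<Rightarrow> nat \<Rightarrow> bool"
  where "lifts_cycles A dA B dB f s \<longleftrightarrow> (\<forall>P Q b. cycle_upto B dB P Q s b \<longrightarrow>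
    (\<exists>a. cycle_upto A dA P Q s a \<and> (\<forall>k<s. f (P - int k) (Q - int k) (a k) = b k)))"

lemma lifts_cyclesD:
  "lifts_cycles A dA B dB f s \<Longrightarrow> cycle_upto B dB P Q s b \<Longrightarrow>
    \<exists>a. cycle_upto A dA P Q s a \<and> (\<forall>k<s. f (P - int k) (Q - int k) (a k) = b k)"
  unfolding lifts_cycles_def by blast

lemma lifts_cycles_0: "lifts_cycles A dA B dB f 0"
  by (simp add: lifts_cycles_def cycle_upto_def)

context mcomplex_hom
begin

text \<open>\<open>b - f a\<close> vanishes at the bottom, so shifted down by one column it is a cycle of length
  \<open>s\<close>; a lift of it, shifted back up, corrects \<open>a\<close>.\<close>
lemma lift_over_bottom:
  assumes lifts: "lifts_cycles A dA B dB f s"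
    and a: "cycle_upto A dA p q (Suc s) a" and b: "cycle_upto B dB p q (Suc s) b"
    and bottom: "f p q (a 0) = b 0"
  shows "\<exists>a'. cycle_upto A dA p q (Suc s) a' \<and> (\<forall>k<Suc s. f (p - int k) (q - int k) (a' k) = b k)"
proof -
  define c where "c = (\<lambda>k. b k - seq_image f p q a k)"
  have c: "cycle_upto B dB p q (Suc s) c"
    unfolding c_def using b cycle_upto_hom[OF a] by (rule tgt.cycle_upto_diff)
  have c0: "c 0 = 0"
    using bottom by (simp add: c_def)
  have "cycle_upto B dB (p - 1) (q - 1) s (\<lambda>k. c (Suc k))"
  proof -
    have "tdiff dB (p - 1) (q - 1) (\<lambda>k. c (Suc k)) l = tdiff dB p q c (Suc l)" for l
      using tgt.tdiff_shift[of 1 c p q l] c0 by simp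
    with c show ?thesis
      by (auto simp: cycle_upto_def algebra_simps)
  qed
  then obtain a'' where a'': "cycle_upto A dA (p - 1) (q - 1) s a''"
    and fa'': "\<forall>k<s. f (p - 1 - int k) (q - 1 - int k) (a'' k) = c (Suc k)"
    using lifts_cyclesD[OF lifts] by blast
  have "zigzag A dA (p - 1) (q - 1) s (a''(s := 0))"
    using a'' by (simp add: zigzag_def)
  then have shifted: "cycle_upto A dA p q (Suc s) (delay 1 (a''(s := 0)))"
    using src.zigzag_delay[of p 1 q s] by (simp add: zigzag_def cycle_upto_def)
  have "f (p - int k) (q - int k) (delay 1 (a''(s := 0)) k) = c k" if "k < Suc s" for k
    using that fa''[rule_format, of "k - 1"] c0 by (cases k) (auto simp: delay_def algebra_simps)
  then show ?thesis
    using src.cycle_upto_add[OF a shifted] a shifted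
    by (intro exI[of _ "\<lambda>k. a k + delay 1 (a''(s := 0)) k"])
       (auto simp: hom_add c_def cycle_upto_def)
qed

lemma boundary_in_kernel:
  assumes lifts: "lifts_cycles A dA B dB f (Suc s)"
    and y: "y \<in> Bset (Suc s) A dA p q" and fy: "f p q y = 0"
  shows "\<exists>v. zigzag A dA (p + int s) (q + int s - 1) s v \<and>
    tdiff dA (p + int s) (q + int s - 1) v s = y \<and>
    (\<forall>k\<le>s. f (p + int s - int k) (q + int s - 1 - int k) (v k) = 0)"
proof -
  define P Q where "P = p + int s" and "Q = q + int s - 1"
  obtain w where w: "zigzag A dA P Q s w" and y_eq: "y = tdiff dA P Q w s"
    using y by (auto simp: src.Bset_Suc_iff P_def Q_def)
  have "tdiff dB P Q (seq_image f P Q w) s = f (P - int s) (Q + 1 - int s) y"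
    unfolding y_eq using zigzag_mem[OF w] by (intro hom_tdiff[symmetric])
  with fy have "cycle_upto B dB P Q (Suc s) (seq_image f P Q w)"
    using zigzag_hom[OF w] by (simp add: cycle_upto_Suc P_def Q_def)
  then obtain u where u: "cycle_upto A dA P Q (Suc s) u"
    and fu: "\<forall>k<Suc s. f (P - int k) (Q - int k) (u k) = f (P - int k) (Q - int k) (w k)"
    using lifts_cyclesD[OF lifts] by blast
  have uz: "zigzag A dA P Q s u" and u_s: "tdiff dA P Q u s = 0"
    using u by (simp_all add: cycle_upto_Suc)
  have "tdiff dA P Q (\<lambda>k. w k - u k) s = y"
    using zigzag_mem[OF w] zigzag_mem[OF uz] by (simp add: src.tdiff_diff y_eq u_s)
  moreover have "f (P - int k) (Q - int k) (w k - u k) = 0" if "k \<le> s" for k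
    using fu that zigzag_mem[OF w that] zigzag_mem[OF uz that] by (simp add: hom_diff)
  ultimately show ?thesis
    using src.zigzag_diff[OF w uz] by (auto simp: P_def Q_def)
qed

end

section \<open>Trivial fibrations of the \<open>r\<close>-model structure\<close>

locale trivial_r_fibration = mcomplex_hom +
  fixes r :: nat
  assumes quasi_iso: "E_quasi_iso r A dA B dB f"
    and fibration: "E_fib r A dA B dB f"
begin

lemma E_surj:
  assumes "i \<le> Suc r" and y: "y \<in> Zset i B dB p q"
  shows "\<exists>x \<in> Zset i A dA p q. f p q x - y \<in> Bset i B dB p q"
proof -
  have "Emap i B dB f p q ` Eset i A dA p q = Eset i B dB p q"
  proof (cases "i \<le> r")
    case False
    with assms(1) have "i = Suc r" by simp
    then show ?thesis using quasi_iso by (simp add: E_quasi_iso_def bij_betw_def)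
  qed (use fibration in \<open>simp add: E_fib_def\<close>)
  moreover have "Ecoset i B dB p q y \<in> Eset i B dB p q"
    using y by (simp add: Eset_def)
  ultimately have "Ecoset i B dB p q y \<in> Emap i B dB f p q ` Eset i A dA p q"
    by simp
  then obtain x where x: "x \<in> Zset i A dA p q"
    and "Emap i B dB f p q (Ecoset i A dA p q x) = Ecoset i B dB p q y"
    by (auto simp: Eset_def)
  then have "Ecoset i B dB p q (f p q x) = Ecoset i B dB p q y"
    by (simp add: Emap_Ecoset Zset_mem)
  with x show ?thesis
    by (auto simp: tgt.Ecoset_eq_iff)
qed

lemma E_inj:
  assumes x: "x \<in> Zset (Suc r) A dA p q" and fx: "f p q x \<in> Bset (Suc r) B dB p q"
  shows "x \<in> Bset (Suc r) A dA p q"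
proof -
  have zero: "0 \<in> Zset (Suc r) A dA p q"
    by (auto simp: Zset_Suc_iff cycle_upto_def src.tdiff_zero intro: exI[of _ "\<lambda>_. 0"])
  have "inj_on (Emap (Suc r) B dB f p q) (Eset (Suc r) A dA p q)"
    using quasi_iso by (simp add: E_quasi_iso_def bij_betw_def)
  moreover have "Emap (Suc r) B dB f p q (Ecoset (Suc r) A dA p q x) =
      Emap (Suc r) B dB f p q (Ecoset (Suc r) A dA p q 0)"
    using fx by (simp add: Emap_Ecoset Zset_mem[OF x] tgt.Ecoset_eq_iff)
  ultimately have "Ecoset (Suc r) A dA p q x = Ecoset (Suc r) A dA p q 0"
    by (rule inj_onD) (use x zero in \<open>simp_all add: Eset_def\<close>)
  then show ?thesis
    by (simp add: src.Ecoset_eq_iff)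
qed

lemma surj_hom: "y \<in> B p q \<Longrightarrow> \<exists>x \<in> A p q. f p q x = y"
  using E_surj[of 0 y p q] by (simp add: Zset_0 tgt.Bset_0_iff)

lemma lift_zigzag:
  assumes lifts: "lifts_cycles A dA B dB f s" and b: "zigzag B dB P Q s b"
  shows "\<exists>a. zigzag A dA P Q s a \<and> (\<forall>k\<le>s. f (P - int k) (Q - int k) (a k) = b k)"
proof -
  obtain a where a: "cycle_upto A dA P Q s a" and fa: "\<forall>k<s. f (P - int k) (Q - int k) (a k) = b k"
    using lifts_cyclesD[OF lifts] b unfolding zigzag_def by blast
  obtain x where x: "x \<in> A (P - int s) (Q - int s)" "f (P - int s) (Q - int s) x = b s"
    using surj_hom b unfolding zigzag_def by blast
  have "zigzag A dA P Q s (a(s := x))"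
    using a x by (simp add: zigzag_def)
  with fa x show ?thesis
    by (intro exI[of _ "a(s := x)"]) (auto simp: le_less)
qed

lemma lift_boundary:
  assumes lifts: "lifts_cycles A dA B dB f s" and y: "y \<in> Bset (Suc s) B dB p q"
  shows "\<exists>e. (\<forall>t. cycle_upto A dA p q t e) \<and> f p q (e 0) = y"
proof -
  define P Q where "P = p + int s" and "Q = q + int s - 1"
  obtain v where v: "zigzag B dB P Q s v" and y_eq: "y = tdiff dB P Q v s"
    using y by (auto simp: tgt.Bset_Suc_iff P_def Q_def)
  obtain u where u: "zigzag A dA P Q s u" and fu: "\<forall>k\<le>s. f (P - int k) (Q - int k) (u k) = v k"
    using lift_zigzag[OF lifts v] by blast
  obtain e where e0: "e 0 = tdiff dA P Q u s"
    and e: "\<forall>t. cycle_upto A dA (P - int s) (Q + 1 - int s) t e"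
    using src.tdiff_extends_to_cycle[OF u] by blast
  have "f (P - int s) (Q + 1 - int s) (e 0) = tdiff dB P Q (seq_image f P Q u) s"
    unfolding e0 using zigzag_mem[OF u] by (intro hom_tdiff)
  also have "\<dots> = y"
    unfolding y_eq using fu by (intro tdiff_cong) simp
  finally show ?thesis
    using e by (auto simp: P_def Q_def)
qed

lemma lifts_cycles_Suc_low:
  assumes "s \<le> r" and lifts: "lifts_cycles A dA B dB f s"
  shows "lifts_cycles A dA B dB f (Suc s)"
  unfolding lifts_cycles_def
proof (intro allI impI)
  fix p q b assume b: "cycle_upto B dB p q (Suc s) b"
  then have "b 0 \<in> Zset (Suc s) B dB p q"
    by (auto simp: Zset_Suc_iff)
  then obtain x where x: "x \<in> Zset (Suc s) A dA p q" and fx: "f p q x - b 0 \<in> Bset (Suc s) B dB p q"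
    using E_surj[of "Suc s"] \<open>s \<le> r\<close> by blast
  obtain a where a: "cycle_upto A dA p q (Suc s) a" and a0: "a 0 = x"
    using x by (auto simp: Zset_Suc_iff)
  obtain e where e: "cycle_upto A dA p q (Suc s) e" and fe: "f p q (e 0) = f p q x - b 0"
    using lift_boundary[OF lifts fx] by blast
  have "f p q (a 0 - e 0) = b 0"
    using Zset_mem[OF x] cycle_upto_bottom[OF e] by (simp add: hom_diff a0 fe)
  then show "\<exists>a'. cycle_upto A dA p q (Suc s) a' \<and>
      (\<forall>k<Suc s. f (p - int k) (q - int k) (a' k) = b k)"
    using lift_over_bottom[OF lifts src.cycle_upto_diff[OF a e] b] by simp
qed

lemma lifts_cycles_Suc_high:
  assumes "r < s" and lifts: "lifts_cycles A dA B dB f s"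
    and lifts_r: "lifts_cycles A dA B dB f (Suc r)"
  shows "lifts_cycles A dA B dB f (Suc s)"
  unfolding lifts_cycles_def
proof (intro allI impI)
  fix p q b assume b: "cycle_upto B dB p q (Suc s) b"
  then have bz: "zigzag B dB p q s b" and b_s: "tdiff dB p q b s = 0"
    by (simp_all add: cycle_upto_Suc)
  obtain a where a: "zigzag A dA p q s a" and fa: "\<forall>k\<le>s. f (p - int k) (q - int k) (a k) = b k"
    using lift_zigzag[OF lifts bz] by blast
  define y where "y = tdiff dA p q a s"
  define p' q' where "p' = p - int s" and "q' = q + 1 - int s"
  have "y \<in> Zset (Suc r) A dA p' q'"
    using src.tdiff_extends_to_cycle[OF a] by (auto simp: Zset_Suc_iff y_def p'_def q'_def)
  moreover have fy: "f p' q' y = 0"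
  proof -
    have "f p' q' y = tdiff dB p q (seq_image f p q a) s"
      unfolding y_def p'_def q'_def using zigzag_mem[OF a] by (rule hom_tdiff)
    also have "\<dots> = 0"
      using fa b_s by (simp cong: tdiff_cong)
    finally show ?thesis .
  qed
  ultimately have "y \<in> Bset (Suc r) A dA p' q'"
    using E_inj by (simp add: tgt.zero_in_Bset)
  then obtain v where v: "zigzag A dA (p' + int r) (q' + int r - 1) r v"
    and v_r: "tdiff dA (p' + int r) (q' + int r - 1) v r = y"
    and fv: "\<forall>k\<le>r. f (p' + int r - int k) (q' + int r - 1 - int k) (v k) = 0"
    using boundary_in_kernel[OF lifts_r _ fy] by blast
  define t where "t = s - r"
  have s_eq: "s = r + t" and P: "p' + int r = p - int t" and Q: "q' + int r - 1 = q - int t"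
    using \<open>r < s\<close> by (simp_all add: t_def p'_def q'_def of_nat_diff)
  have dz: "zigzag A dA p q s (delay t v)"
    using src.zigzag_delay[of p t q r v] v by (simp add: P Q s_eq)
  have "tdiff dA p q (delay t v) s = y"
    using v_r by (simp add: src.tdiff_delay P Q s_eq)
  then have "cycle_upto A dA p q (Suc s) (\<lambda>k. a k - delay t v k)"
    using src.zigzag_diff[OF a dz] zigzag_mem[OF a] zigzag_mem[OF dz]
    by (simp add: cycle_upto_Suc src.tdiff_diff y_def)
  moreover have "f (p - int k) (q - int k) (delay t v k) = 0" if "k \<le> s" for k
    using fv[rule_format, of "k - t"] that by (auto simp: delay_def P Q s_eq)
  ultimately show "\<exists>a'. cycle_upto A dA p q (Suc s) a' \<and>
      (\<forall>k<Suc s. f (p - int k) (q - int k) (a' k) = b k)"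
    using fa zigzag_mem[OF a] zigzag_mem[OF dz]
    by (intro exI[of _ "\<lambda>k. a k - delay t v k"]) (simp add: hom_diff less_Suc_eq_le)
qed

lemma lifts_cycles_upto: "s \<le> Suc r \<Longrightarrow> lifts_cycles A dA B dB f s"
  by (induction s) (simp_all add: lifts_cycles_0 lifts_cycles_Suc_low)

lemma lifts_cycles: "lifts_cycles A dA B dB f s"
proof (induction s)
  case (Suc s)
  show ?case
  proof (cases "s \<le> r")
    case False
    then show ?thesis
      using lifts_cycles_Suc_high[OF _ Suc lifts_cycles_upto[OF order.refl]] by simp
  qed (simp add: lifts_cycles_upto)
qed (rule lifts_cycles_0)

lemma ZW_tuple_lift:
  assumes b: "ZW_tuple s p q B dB b"
  shows "\<exists>a. ZW_tuple s p q A dA a \<and> (\<forall>j\<le>s - 1. f (p - int j) (q - int j) (a j) = b j)"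
proof (cases "s = 0")
  case True
  then obtain x where "x \<in> A p q" "f p q x = b 0"
    using b surj_hom[of "b 0" p q] by (auto simp: ZW_tuple_def)
  with True show ?thesis
    by (intro exI[of _ "\<lambda>_. x"]) (simp add: ZW_tuple_def)
next
  case False
  then have "cycle_upto B dB p q s b"
    using b by (simp add: ZW_tuple_iff_cycle_upto)
  then obtain a where "cycle_upto A dA p q s a" "\<forall>k<s. f (p - int k) (q - int k) (a k) = b k"
    using lifts_cyclesD[OF lifts_cycles] by blast
  with False show ?thesis
    by (intro exI[of _ a]) (auto simp: ZW_tuple_iff_cycle_upto)
qed

end

lemma mc_hom_comp:
  "mc_hom scA A dA scB B dB h \<Longrightarrow> mc_hom scB B dB scC C dC f \<Longrightarrow>
    mc_hom scA A dA scC C dC (\<lambda>p q x. f p q (h p q x))"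
  unfolding mc_hom_def by simp

theorem mainTheorem18:
  fixes n :: enat and r s :: nat and p q :: int
    and scZ :: "'r::comm_ring_1 \<Rightarrow> 'z::ab_group_add \<Rightarrow> 'z"
    and Z :: "int \<Rightarrow> int \<Rightarrow> 'z set" and dZ :: "nat \<Rightarrow> int \<Rightarrow> int \<Rightarrow> 'z \<Rightarrow> 'z"
    and gen :: "nat \<Rightarrow> 'z"
    and sc :: "'r \<Rightarrow> 'm::ab_group_add \<Rightarrow> 'm"
    and A B :: "int \<Rightarrow> int \<Rightarrow> 'm set" and dA dB :: "nat \<Rightarrow> int \<Rightarrow> int \<Rightarrow> 'm \<Rightarrow> 'm"
    and f :: "int \<Rightarrow> int \<Rightarrow> 'm \<Rightarrow> 'm" and g :: "int \<Rightarrow> int \<Rightarrow> 'z \<Rightarrow> 'm"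
  assumes "2 \<le> n"
    and "is_ZW n s p q scZ Z dZ gen sc"
    and "multicomplex n sc A dA" and "multicomplex n sc B dB"
    and "mc_hom sc A dA sc B dB f"
    and "E_quasi_iso r A dA B dB f"
    and "E_fib r A dA B dB f"
    and "mc_hom scZ Z dZ sc B dB g"
  shows "\<exists>h. mc_hom scZ Z dZ sc A dA h \<and>
              (\<forall>p' q'. \<forall>x\<in>Z p' q'. f p' q' (h p' q' x) = g p' q' x)"
proof -
  note ZW = assms(2)[unfolded is_ZW_def]
  interpret f: trivial_r_fibration n sc A dA sc B dB f r
    using assms(3-7) by unfold_locales
  interpret g: mcomplex_hom n scZ Z dZ sc B dB g
    using ZW assms(4,8) by unfold_locales simp_all
  have "ZW_tuple s p q Z dZ gen"
    using ZW by blast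
  then obtain a where a: "ZW_tuple s p q A dA a"
    and fa: "\<forall>j\<le>s - 1. f (p - int j) (q - int j) (a j) = g (p - int j) (q - int j) (gen j)"
    using f.ZW_tuple_lift[OF g.ZW_tuple_hom] by blast
  obtain h where h: "mc_hom scZ Z dZ sc A dA h"
    and h_gen: "\<forall>j\<le>s - 1. h (p - int j) (q - int j) (gen j) = a j"
    using ZW assms(3) a by blast
  have unique: "\<forall>p' q'. \<forall>x\<in>Z p' q'. h' p' q' x = h'' p' q' x"
    if "mc_hom scZ Z dZ sc B dB h'" "mc_hom scZ Z dZ sc B dB h''"
      "\<forall>j\<le>s - 1. h' (p - int j) (q - int j) (gen j) = h'' (p - int j) (q - int j) (gen j)"
    for h' h''
    using ZW assms(4) that by blast
  have "\<forall>p' q'. \<forall>x\<in>Z p' q'. f p' q' (h p' q' x) = g p' q' x"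
    using fa h_gen by (intro unique mc_hom_comp[OF h assms(5)] assms(8)) simp
  with h show ?thesis by blast
qed

end
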